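(* Let $k$ be an algebraically closed field and $\underline{x},\underline{y}$ sequences of positive integers, and let $C_n=C_n(\underline{x},\underline{y})$ be the Cartan matrix of $A_n(\underline{x},\underline{y})$. Then for $m\geq1$, $$C_{2m}= C_{2m-1}\begin{pmatrix} 1 & y_m \\ 0 & 1 \end{pmatrix} = \begin{pmatrix} F_{2m-1}(\underline{y},S\underline{x}) & F_{2m}(\underline{y},S\underline{x}) \\ F_{2m}(\underline{x},\underline{y}) & F_{2m+1}(\underline{x},\underline{y}) \end{pmatrix},$$ and for $m\geq 0$ (with $C_0$ the identity matrix) $$C_{2m+1}=C_{2m}\begin{pmatrix} 1 & 0 \\ x_{m+1} & 1 \end{pmatrix} = \begin{pmatrix} F_{2m+1}(\underline{y},S\underline{x}) & F_{2m}(\underline{y},S\underline{x})\\ F_{2m+2}(\underline{x},\underline{y}) & F_{2m+1}(\underline{x},\underline{y}) \end{pmatrix}.$$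
   Context: Paths are composed right to left: for arrows $\rho,\sigma$, $\rho\sigma$ denotes the path $\sigma$ followed by $\rho$. For sequences of positive integers $\underline{x}=(x_1,x_2,\dots)$, $\underline{y}=(y_1,y_2,\dots)$ and $n\geq0$, $A_n(\underline{x},\underline{y})$ is the quotient of the path algebra of the quiver with vertices $1,2$, arrows $\alpha_{i,j}:1\to2$ ($1\le i\le\lfloor\frac{n+1}{2}\rfloor$, $1\le j\le x_i$) and arrows $\beta_{i,j}:2\to1$ ($1\le i\le\lfloor\frac n2\rfloor$, $1\le j\le y_i$), by the ideal generated by $\alpha_{i,j}\beta_{i',j'}$ for $i'<i$ and $\beta_{i',j'}\alpha_{i,j}$ for $i\le i'$ (all admissible $j,j'$). With $e_1,e_2$ the trivial paths, the Cartan matrix is $C_n(\underline{x},\underline{y})=(c_{ij})$, $c_{ij}=\dim_k e_iA_n(\underline{x},\underline{y})e_j$ (the number of nonzero paths from $j$ to $i$). For sequences $\underline{u},\underline{v}$, the generalized Fibonacci numbers are $F_0(\underline{u},\underline{v})=0$, $F_1(\underline{u},\underline{v})=1$, $F_{2m}(\underline{u},\underline{v})=F_{2m-2}(\underline{u},\underline{v})+F_{2m-1}(\underline{u},\underline{v})u_m$, $F_{2m+1}(\underline{u},\underline{v})=F_{2m-1}(\underline{u},\underline{v})+F_{2m}(\underline{u},\underline{v})v_m$ for $m\geq1$. $S\underline{x}=(x_2,x_3,\dots)$ is the shift. *)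

theory Defs
  imports Main
begin

text \<open>Sequences of positive integers are functions nat => nat, indexed from 1
  (the value at 0 is irrelevant).  Shift: S x = (x 2, x 3, ...).\<close>

definition shift :: "(nat \<Rightarrow> nat) \<Rightarrow> nat \<Rightarrow> nat" where
  "shift x = (\<lambda>i. x (Suc i))"

fun gfib :: "(nat \<Rightarrow> nat) \<Rightarrow> (nat \<Rightarrow> nat) \<Rightarrow> nat \<Rightarrow> nat" where
  "gfib u v 0 = 0"
| "gfib u v (Suc 0) = 1"
| "gfib u v (Suc (Suc n)) =
     gfib u v n + gfib u v (Suc n) * (if even n then u ((n + 2) div 2) else v ((n + 1) div 2))"

datatype arrow = Alpha nat nat | Beta nat nat

fun src :: "arrow \<Rightarrow> nat" where
  "src (Alpha i j) = 1" | "src (Beta i j) = 2"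

fun tgt :: "arrow \<Rightarrow> nat" where
  "tgt (Alpha i j) = 2" | "tgt (Beta i j) = 1"

fun arrow_of :: "nat \<Rightarrow> (nat \<Rightarrow> nat) \<Rightarrow> (nat \<Rightarrow> nat) \<Rightarrow> arrow \<Rightarrow> bool" where
  "arrow_of n x y (Alpha i j) = (1 \<le> i \<and> i \<le> (n + 1) div 2 \<and> 1 \<le> j \<and> j \<le> x i)"
| "arrow_of n x y (Beta i j) = (1 \<le> i \<and> i \<le> n div 2 \<and> 1 \<le> j \<and> j \<le> y i)"

text \<open>killed a b: the length-2 path "a followed by b" (i.e. the product b a)
  lies in the ideal of relations: alpha_{i,j} beta_{i',j'} = 0 for i' < i and
  beta_{i',j'} alpha_{i,j} = 0 for i <= i'.\<close>
fun killed :: "arrow \<Rightarrow> arrow \<Rightarrow> bool" where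
  "killed (Beta i' j') (Alpha i j) = (i' < i)"
| "killed (Alpha i j) (Beta i' j') = (i \<le> i')"
| "killed _ _ = False"

text \<open>Nonzero paths from vertex a to vertex b in A_n(x,y): lists of arrows in
  order of traversal (the empty list is the trivial path e_a, only when a = b),
  composable, and containing no relation as a subpath (the ideal is monomial,
  so these paths form a basis of the quotient).\<close>
definition nonzero_paths ::
  "nat \<Rightarrow> (nat \<Rightarrow> nat) \<Rightarrow> (nat \<Rightarrow> nat) \<Rightarrow> nat \<Rightarrow> nat \<Rightarrow> arrow list set" where
  "nonzero_paths n x y a b =
    {p. (\<forall>r \<in> set p. arrow_of n x y r)
      \<and> (p = [] \<longrightarrow> a = b)
      \<and> (p \<noteq> [] \<longrightarrow> src (hd p) = a \<and> tgt (last p) = b)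
      \<and> (\<forall>k. Suc k < length p \<longrightarrow> tgt (p ! k) = src (p ! Suc k))
      \<and> (\<forall>k. Suc k < length p \<longrightarrow> \<not> killed (p ! k) (p ! Suc k))}"

definition mat2 :: "nat \<Rightarrow> nat \<Rightarrow> nat \<Rightarrow> nat \<Rightarrow> nat \<Rightarrow> nat \<Rightarrow> nat" where
  "mat2 a b c d = (\<lambda>i j. if i = 1 \<and> j = 1 then a else if i = 1 \<and> j = 2 then b
                     else if i = 2 \<and> j = 1 then c else if i = 2 \<and> j = 2 then d else 0)"

definition mmult2 :: "(nat \<Rightarrow> nat \<Rightarrow> nat) \<Rightarrow> (nat \<Rightarrow> nat \<Rightarrow> nat) \<Rightarrow> nat \<Rightarrow> nat \<Rightarrow> nat" where
  "mmult2 A B = (\<lambda>i j. \<Sum>k\<in>{1,2}. A i k * B k j)"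

definition cartan :: "nat \<Rightarrow> (nat \<Rightarrow> nat) \<Rightarrow> (nat \<Rightarrow> nat) \<Rightarrow> nat \<Rightarrow> nat \<Rightarrow> nat" where
  "cartan n x y = (\<lambda>i j. if i \<in> {1,2} \<and> j \<in> {1,2} then card (nonzero_paths n x y j i) else 0)"

end

theory Submission
  imports Defs
begin

text \<open>Give the arrows \<open>\<alpha>\<^sub>i\<^sub>,\<^sub>j\<close> level \<open>2i - 1\<close> and the arrows \<open>\<beta>\<^sub>i\<^sub>,\<^sub>j\<close> level \<open>2i\<close>.
  Then \<open>A\<^sub>n\<close> has exactly the arrows of level at most \<open>n\<close>, and a composable path avoids
  the relations iff the levels of its arrows strictly decrease in the order of traversal.
  Hence a nonzero path of \<open>A\<^sub>n\<^sub>+\<^sub>1\<close> is either a nonzero path of \<open>A\<^sub>n\<close> or an arrow of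
  level \<open>n + 1\<close> followed by a nonzero path of \<open>A\<^sub>n\<close>.  Counting gives \<open>C\<^sub>n\<^sub>+\<^sub>1 = C\<^sub>n E\<close> for
  an elementary matrix \<open>E\<close> recording the arrows of level \<open>n + 1\<close>, and the closed forms
  follow by induction from the Fibonacci recursion.\<close>

fun level :: "arrow \<Rightarrow> nat" where
  "level (Alpha i j) = 2 * i - 1"
| "level (Beta i j) = 2 * i"

definition top_arrows :: "nat \<Rightarrow> (nat \<Rightarrow> nat) \<Rightarrow> (nat \<Rightarrow> nat) \<Rightarrow> nat \<Rightarrow> arrow set" where
  "top_arrows n x y a = {r. arrow_of n x y r \<and> level r = n \<and> src r = a}"

lemma arrow_of_iff_Suc_level: "arrow_of n x y r \<longleftrightarrow> arrow_of (Suc n) x y r \<and> level r \<le> n"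
  by (cases r) auto

lemma arrow_of_Suc: "arrow_of n x y r \<Longrightarrow> arrow_of (Suc n) x y r"
  using arrow_of_iff_Suc_level by blast

lemma level_le: "arrow_of n x y r \<Longrightarrow> level r \<le> n"
  by (cases r) auto

lemma not_killed_iff_level_less:
  assumes "arrow_of n x y r" and "tgt r = src s"
  shows "\<not> killed r s \<longleftrightarrow> level s < level r"
  using assms by (cases r; cases s) auto

lemma finite_top_arrows: "finite (top_arrows n x y a)"
proof (rule finite_subset)
  show "top_arrows n x y a \<subseteq>
      Alpha ((n + 1) div 2) ` {1..x ((n + 1) div 2)} \<union> Beta (n div 2) ` {1..y (n div 2)}"
  proof
    fix r assume "r \<in> top_arrows n x y a"
    then show "r \<in> Alpha ((n + 1) div 2) ` {1..x ((n + 1) div 2)} \<union> Beta (n div 2) ` {1..y (n div 2)}"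
      unfolding top_arrows_def by (cases r) auto
  qed
qed simp

lemma top_arrows_even:
  assumes "1 \<le> m"
  shows "top_arrows (2 * m) x y 1 = {}"
    and "top_arrows (2 * m) x y 2 = Beta m ` {1..y m}"
proof -
  have "r \<in> top_arrows (2 * m) x y a \<longleftrightarrow> a = 2 \<and> r \<in> Beta m ` {1..y m}" for r a
    using assms unfolding top_arrows_def by (cases r) auto
  then show "top_arrows (2 * m) x y 1 = {}" and "top_arrows (2 * m) x y 2 = Beta m ` {1..y m}"
    by auto
qed

lemma top_arrows_odd:
  shows "top_arrows (Suc (2 * m)) x y 2 = {}"
    and "top_arrows (Suc (2 * m)) x y 1 = Alpha (Suc m) ` {1..x (Suc m)}"
proof -
  have "2 * i - 1 = Suc (2 * m) \<longleftrightarrow> i = Suc m" "2 * i \<noteq> Suc (2 * m)" for i :: nat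
    by arith+
  then have "r \<in> top_arrows (Suc (2 * m)) x y a \<longleftrightarrow> a = 1 \<and> r \<in> Alpha (Suc m) ` {1..x (Suc m)}"
    for r a
    unfolding top_arrows_def by (cases r) auto
  then show "top_arrows (Suc (2 * m)) x y 2 = {}"
    and "top_arrows (Suc (2 * m)) x y 1 = Alpha (Suc m) ` {1..x (Suc m)}"
    by auto
qed

lemma adjacent_pairs_Cons:
  "(\<forall>k. Suc k < length (r # p) \<longrightarrow> R ((r # p) ! k) ((r # p) ! Suc k)) \<longleftrightarrow>
   (p \<noteq> [] \<longrightarrow> R r (hd p)) \<and> (\<forall>k. Suc k < length p \<longrightarrow> R (p ! k) (p ! Suc k))"
  by (cases p) (auto simp: nth_Cons split: nat.splits)

lemma Nil_in_nonzero_paths [simp]: "[] \<in> nonzero_paths n x y a b \<longleftrightarrow> a = b"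
  by (simp add: nonzero_paths_def)

lemma nonzero_paths_src_hd: "p \<in> nonzero_paths n x y a b \<Longrightarrow> p \<noteq> [] \<Longrightarrow> src (hd p) = a"
  by (simp add: nonzero_paths_def)

lemma nonzero_paths_level_hd: "p \<in> nonzero_paths n x y a b \<Longrightarrow> p \<noteq> [] \<Longrightarrow> level (hd p) \<le> n"
  by (cases p) (auto simp: nonzero_paths_def intro: level_le)

lemma Cons_in_nonzero_paths_killed:
  "r # p \<in> nonzero_paths n x y a b \<longleftrightarrow>
    arrow_of n x y r \<and> src r = a \<and> p \<in> nonzero_paths n x y (tgt r) b \<and>
    (p \<noteq> [] \<longrightarrow> \<not> killed r (hd p))"
  unfolding nonzero_paths_def mem_Collect_eq adjacent_pairs_Cons[where R = "\<lambda>u v. tgt u = src v"]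
    adjacent_pairs_Cons[where R = "\<lambda>u v. \<not> killed u v"]
  by (cases p) auto

lemma Cons_in_nonzero_paths:
  "r # p \<in> nonzero_paths n x y a b \<longleftrightarrow>
    arrow_of n x y r \<and> src r = a \<and> p \<in> nonzero_paths n x y (tgt r) b \<and>
    (p \<noteq> [] \<longrightarrow> level (hd p) < level r)"
  unfolding Cons_in_nonzero_paths_killed
  using not_killed_iff_level_less[of n x y r "hd p"] nonzero_paths_src_hd[of p n x y "tgt r" b]
  by auto

lemma nonzero_paths_mono: "nonzero_paths n x y a b \<subseteq> nonzero_paths (Suc n) x y a b"
  by (auto simp: nonzero_paths_def intro: arrow_of_Suc)

lemma nonzero_paths_restrict:
  "p \<in> nonzero_paths (Suc n) x y a b \<Longrightarrow> (p \<noteq> [] \<longrightarrow> level (hd p) \<le> n) \<Longrightarrow>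
    p \<in> nonzero_paths n x y a b"
proof (induction p arbitrary: a)
  case (Cons r p)
  then show ?case
    by (simp add: Cons_in_nonzero_paths arrow_of_iff_Suc_level[of n]) (meson le_trans less_imp_le)
qed simp

lemma nonzero_paths_Suc:
  "nonzero_paths (Suc n) x y a b = nonzero_paths n x y a b \<union>
     (\<lambda>(r, q). r # q) ` (SIGMA r:top_arrows (Suc n) x y a. nonzero_paths n x y (tgt r) b)"
proof (intro equalityI subsetI)
  fix p assume p: "p \<in> nonzero_paths (Suc n) x y a b"
  show "p \<in> nonzero_paths n x y a b \<union>
     (\<lambda>(r, q). r # q) ` (SIGMA r:top_arrows (Suc n) x y a. nonzero_paths n x y (tgt r) b)"
  proof (cases "p = [] \<or> level (hd p) \<le> n")
    case True
    then have "p \<in> nonzero_paths n x y a b"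
      using nonzero_paths_restrict[OF p] True by blast
    then show ?thesis by simp
  next
    case False
    then obtain r q where pq: "p = r # q" and r: "\<not> level r \<le> n"
      by (cases p) auto
    have r_arrow: "arrow_of (Suc n) x y r" and "src r = a"
      and q: "q \<in> nonzero_paths (Suc n) x y (tgt r) b"
      and q_level: "q \<noteq> [] \<longrightarrow> level (hd q) < level r"
      using p unfolding pq Cons_in_nonzero_paths by blast+
    have "level r = Suc n"
      using r level_le[OF r_arrow] by simp
    then have "r \<in> top_arrows (Suc n) x y a"
      using r_arrow \<open>src r = a\<close> by (simp add: top_arrows_def)
    moreover have "q \<in> nonzero_paths n x y (tgt r) b"
      by (rule nonzero_paths_restrict[OF q]) (use q_level \<open>level r = Suc n\<close> in auto)
    ultimately show ?thesis using pq by auto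
  qed
next
  fix p assume "p \<in> nonzero_paths n x y a b \<union>
     (\<lambda>(r, q). r # q) ` (SIGMA r:top_arrows (Suc n) x y a. nonzero_paths n x y (tgt r) b)"
  then show "p \<in> nonzero_paths (Suc n) x y a b"
  proof (elim UnE)
    assume "p \<in> nonzero_paths n x y a b"
    then show ?thesis using nonzero_paths_mono by blast
  next
    assume "p \<in> (\<lambda>(r, q). r # q) ` (SIGMA r:top_arrows (Suc n) x y a. nonzero_paths n x y (tgt r) b)"
    then obtain r q where "p = r # q" "r \<in> top_arrows (Suc n) x y a"
      and q: "q \<in> nonzero_paths n x y (tgt r) b"
      by auto
    moreover have "q \<in> nonzero_paths (Suc n) x y (tgt r) b"
      using q nonzero_paths_mono by blast
    ultimately show ?thesis
      using nonzero_paths_level_hd[OF q] by (auto simp: top_arrows_def Cons_in_nonzero_paths)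
  qed
qed

lemma nonzero_paths_Suc_disjoint:
  "nonzero_paths n x y a b \<inter>
     (\<lambda>(r, q). r # q) ` (SIGMA r:top_arrows (Suc n) x y a. nonzero_paths n x y (tgt r) b) = {}"
  using nonzero_paths_level_hd by (fastforce simp: top_arrows_def)

lemma finite_nonzero_paths: "finite (nonzero_paths n x y a b)"
proof (induction n arbitrary: a b)
  case 0
  have "nonzero_paths 0 x y a b \<subseteq> {[]}"
  proof
    fix p assume "p \<in> nonzero_paths 0 x y a b"
    then show "p \<in> {[]}"
      by (cases p) (auto simp: Cons_in_nonzero_paths elim: arrow_of.elims)
  qed
  then show ?case by (rule finite_subset) simp
next
  case (Suc n)
  then show ?case
    unfolding nonzero_paths_Suc by (intro finite_UnI finite_imageI finite_SigmaI finite_top_arrows)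
qed

lemma card_nonzero_paths_Suc:
  "card (nonzero_paths (Suc n) x y a b) =
     card (nonzero_paths n x y a b) + (\<Sum>r\<in>top_arrows (Suc n) x y a. card (nonzero_paths n x y (tgt r) b))"
proof -
  have "inj_on (\<lambda>(r, q). r # q) A" for A :: "(arrow \<times> arrow list) set"
    by (auto simp: inj_on_def)
  then show ?thesis
    unfolding nonzero_paths_Suc
    by (subst card_Un_disjoint)
      (auto simp: card_image finite_nonzero_paths finite_top_arrows nonzero_paths_Suc_disjoint
        intro: finite_imageI)
qed

lemma cartan_even_step:
  assumes "1 \<le> m"
  shows "cartan (2 * m) x y = mmult2 (cartan (2 * m - 1) x y) (mat2 1 (y m) 0 1)"
proof -
  have Suc: "Suc (2 * m - 1) = 2 * m"
    using assms by simp
  have "card (nonzero_paths (2 * m) x y 1 b) = card (nonzero_paths (2 * m - 1) x y 1 b)"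
    and "card (nonzero_paths (2 * m) x y 2 b) =
      card (nonzero_paths (2 * m - 1) x y 2 b) + y m * card (nonzero_paths (2 * m - 1) x y 1 b)"
    for b
    using card_nonzero_paths_Suc[of "2 * m - 1" x y 1 b] card_nonzero_paths_Suc[of "2 * m - 1" x y 2 b]
    unfolding Suc top_arrows_even[OF assms] by (simp_all add: sum.reindex inj_on_def)
  then show ?thesis
    by (auto simp: fun_eq_iff cartan_def mmult2_def mat2_def)
qed

lemma cartan_odd_step:
  "cartan (2 * m + 1) x y = mmult2 (cartan (2 * m) x y) (mat2 1 0 (x (m + 1)) 1)"
proof -
  have "card (nonzero_paths (Suc (2 * m)) x y 2 b) = card (nonzero_paths (2 * m) x y 2 b)"
    and "card (nonzero_paths (Suc (2 * m)) x y 1 b) =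
      card (nonzero_paths (2 * m) x y 1 b) + x (Suc m) * card (nonzero_paths (2 * m) x y 2 b)"
    for b
    using card_nonzero_paths_Suc[of "2 * m" x y 1 b] card_nonzero_paths_Suc[of "2 * m" x y 2 b]
    unfolding top_arrows_odd by (simp_all add: sum.reindex inj_on_def)
  then show ?thesis
    by (auto simp: fun_eq_iff cartan_def mmult2_def mat2_def)
qed

lemma cartan_0: "cartan 0 x y = mat2 1 0 0 1"
proof -
  have "nonzero_paths 0 x y a b = (if a = b then {[]} else {})" for a b
  proof -
    have "p \<in> nonzero_paths 0 x y a b \<longleftrightarrow> p = [] \<and> a = b" for p
      by (cases p) (auto simp: Cons_in_nonzero_paths elim: arrow_of.elims)
    then show ?thesis by auto
  qed
  then show ?thesis
    by (auto simp: cartan_def mat2_def fun_eq_iff)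
qed

lemma mmult2_mat2:
  "mmult2 (mat2 a b c d) (mat2 a' b' c' d') =
    mat2 (a * a' + b * c') (a * b' + b * d') (c * a' + d * c') (c * b' + d * d')"
  by (auto simp: fun_eq_iff mmult2_def mat2_def)

lemma gfib_even: "gfib u v (2 * m + 2) = gfib u v (2 * m) + gfib u v (2 * m + 1) * u (m + 1)"
proof -
  have "2 * m + 2 = Suc (Suc (2 * m))"
    by simp
  then show ?thesis
    by simp
qed

lemma gfib_odd: "gfib u v (2 * m + 3) = gfib u v (2 * m + 1) + gfib u v (2 * m + 2) * v (m + 1)"
proof -
  have "2 * m + 3 = Suc (Suc (2 * m + 1))" "2 * m + 2 = Suc (2 * m + 1)"
    by simp_all
  then show ?thesis
    by (simp only:) (subst gfib.simps(3), simp del: gfib.simps)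
qed

lemma cartan_odd_closed_form:
  "cartan (2 * m + 1) x y =
     mat2 (gfib y (shift x) (2 * m + 1)) (gfib y (shift x) (2 * m)) (gfib x y (2 * m + 2)) (gfib x y (2 * m + 1))"
proof (induction m)
  case 0
  show ?case
    using cartan_odd_step[of 0 x y] by (simp add: cartan_0 mmult2_mat2 numeral_eq_Suc)
next
  case (Suc m)
  have idx: "2 * Suc m = 2 * m + 2" "2 * m + 2 + 1 = 2 * m + 3" "2 * m + 2 + 2 = 2 * m + 4"
    "2 * m + 2 - 1 = 2 * m + 1" "Suc m + 1 = m + 2"
    by simp_all
  have even: "cartan (2 * m + 2) x y = mmult2 (cartan (2 * m + 1) x y) (mat2 1 (y (Suc m)) 0 1)"
    by (rule cartan_even_step[of "Suc m" x y, unfolded idx]) simp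
  have odd: "cartan (2 * m + 3) x y = mmult2 (cartan (2 * m + 2) x y) (mat2 1 0 (x (m + 2)) 1)"
    by (rule cartan_odd_step[of "Suc m" x y, unfolded idx])
  show ?case
    unfolding idx odd even Suc.IH mmult2_mat2 gfib_even[of x y "Suc m", unfolded idx] gfib_odd
      gfib_even[of y "shift x" m]
    by (simp add: shift_def algebra_simps del: gfib.simps)
qed

lemma cartan_even_closed_form:
  assumes "1 \<le> m"
  shows "cartan (2 * m) x y =
     mat2 (gfib y (shift x) (2 * m - 1)) (gfib y (shift x) (2 * m)) (gfib x y (2 * m)) (gfib x y (2 * m + 1))"
proof -
  obtain k where m: "m = Suc k"
    using assms by (cases m) auto
  have idx: "2 * Suc k = 2 * k + 2" "2 * k + 2 - 1 = 2 * k + 1" "2 * k + 2 + 1 = 2 * k + 3"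
    by simp_all
  have even: "cartan (2 * k + 2) x y = mmult2 (cartan (2 * k + 1) x y) (mat2 1 (y (Suc k)) 0 1)"
    by (rule cartan_even_step[of "Suc k" x y, unfolded idx]) simp
  show ?thesis
    unfolding m idx even cartan_odd_closed_form mmult2_mat2 gfib_even[of y "shift x" k] gfib_odd[of x y k]
    by (simp add: algebra_simps del: gfib.simps)
qed

theorem lemma4p1:
  fixes x y :: "nat \<Rightarrow> nat"
  assumes xpos: "\<forall>i\<ge>1. x i > 0"
    and ypos: "\<forall>i\<ge>1. y i > 0"
  shows "(\<forall>m\<ge>1.
            cartan (2*m) x y = mmult2 (cartan (2*m - 1) x y) (mat2 1 (y m) 0 1)
          \<and> cartan (2*m) x y =
              mat2 (gfib y (shift x) (2*m - 1)) (gfib y (shift x) (2*m))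
                   (gfib x y (2*m)) (gfib x y (2*m + 1)))
       \<and> (\<forall>m::nat.
            cartan (2*m + 1) x y = mmult2 (cartan (2*m) x y) (mat2 1 0 (x (m + 1)) 1)
          \<and> cartan (2*m + 1) x y =
              mat2 (gfib y (shift x) (2*m + 1)) (gfib y (shift x) (2*m))
                   (gfib x y (2*m + 2)) (gfib x y (2*m + 1)))"
  using cartan_even_step cartan_even_closed_form cartan_odd_step cartan_odd_closed_form by blast

end
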